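(* Let $n\ge 1$, let $K=\mathbb{R}^n_+=\{x\in\mathbb{R}^n: x_i\ge 0,\ i=1,\dots,n\}$, and let $\bar x\in K\cap\mathbb{Z}^n$. Then the recession cone of $Q(\bar x)$ is $K$, and $Q(\bar x)$ is a full-dimensional polyhedron. Moreover, if $\bar x\neq 0$ and $\ell:=\ell(\bar x)$, then the extreme points of $Q(\bar x)$ are precisely the points $v^1,\dots,v^{\ell}$, where $v^{\ell}=\bar x$ and, for $k=1,\dots,\ell-1$, $v^k$ is the point with entries $v^k_i=\bar x_i$ for $i=1,\dots,k-1$, $v^k_k=\bar x_k+1$, and $v^k_i=0$ for $i=k+1,\dots,n$.
   Context: The lexicographic order on $\mathbb{R}^n$ (associated with the standard basis): for $x,y\in\mathbb{R}^n$, $x\prec y$ iff $x\neq y$ and $x_i<y_i$, where $i$ is the smallest index with $x_i\neq y_i$; $\preceq,\succ,\succeq$ have the obvious meaning. For $\bar x\in K\cap\mathbb{Z}^n$, $Q(\bar x):=\operatorname{conv}\{x\in K\cap\mathbb{Z}^n: x\succeq\bar x\}$. For $\bar x\in K\setminus\{0\}$, the leading index $\ell(\bar x)$ is the largest index $i$ with $\bar x_i>0$. *)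

theory Defs
  imports "HOL-Analysis.Analysis"
begin

text \<open>Vectors of R^n are modelled as real ^ 'n, where the index type 'n is finite
  and well-ordered; the order on 'n plays the role of the standard order on {1..n}.\<close>

definition nonneg_orthant :: "(real ^ 'n) set" where
  "nonneg_orthant = {x. \<forall>i. x $ i \<ge> 0}"

definition int_points :: "(real ^ 'n) set" where
  "int_points = {x. \<forall>i. x $ i \<in> \<int>}"

definition lex_less :: "real ^ 'n::{finite,wellorder} \<Rightarrow> real ^ 'n::{finite,wellorder} \<Rightarrow> bool" where
  "lex_less x y \<longleftrightarrow> x \<noteq> y \<and> x $ (LEAST i. x $ i \<noteq> y $ i) < y $ (LEAST i. x $ i \<noteq> y $ i)"

definition lex_le :: "real ^ 'n::{finite,wellorder} \<Rightarrow> real ^ 'n::{finite,wellorder} \<Rightarrow> bool" where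
  "lex_le x y \<longleftrightarrow> x = y \<or> lex_less x y"

definition Qset :: "real ^ 'n::{finite,wellorder} \<Rightarrow> (real ^ 'n::{finite,wellorder}) set" where
  "Qset xb = convex hull {x. x \<in> nonneg_orthant \<inter> int_points \<and> lex_le xb x}"

definition leading_index :: "real ^ 'n::{finite,wellorder} \<Rightarrow> 'n::{finite,wellorder}" where
  "leading_index x = (GREATEST i. x $ i > 0)"

definition rec_cone :: "'a::real_vector set \<Rightarrow> 'a set" where
  "rec_cone C = {d. \<forall>x\<in>C. \<forall>t::real. t \<ge> 0 \<longrightarrow> x + t *\<^sub>R d \<in> C}"

definition vpt :: "real ^ 'n::{finite,wellorder} \<Rightarrow> 'n::{finite,wellorder} \<Rightarrow> real ^ 'n::{finite,wellorder}" where
  "vpt xb k = (\<chi> i. if i < k then xb $ i else if i = k then xb $ k + 1 else 0)"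

end

theory Submission
  imports Defs
begin

text \<open>Let \<open>V\<close> consist of \<open>xb\<close> and the points \<open>v\<^sup>k\<close>. Every integer point of \<open>K\<close> that is
  lexicographically at least \<open>xb\<close> dominates some point of \<open>V\<close> componentwise, and adding a unit
  vector to such a point keeps it in the generating set; hence \<open>Q = conv V + K\<close>, which is a
  polyhedron with recession cone \<open>K\<close> containing a translate of \<open>K\<close>. An extreme point of
  \<open>conv V + K\<close> must lie in \<open>V\<close>. Conversely \<open>v\<^sup>k\<close> (with \<open>k = \<ell>(xb)\<close> for \<open>xb\<close> itself) is the
  lexicographic minimum of \<open>Q\<close> on the face of \<open>K\<close> where all coordinates beyond \<open>k\<close> vanish,
  and a lexicographic minimum is always an extreme point, since the lexicographic order is
  compatible with convex combinations.\<close>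

section \<open>Lexicographic order\<close>

lemma lex_less_iff:
  "lex_less x y \<longleftrightarrow> (\<exists>i. (\<forall>j<i. x $ j = y $ j) \<and> x $ i < y $ i)"
proof
  assume "lex_less x y"
  then have "x $ (LEAST i. x $ i \<noteq> y $ i) < y $ (LEAST i. x $ i \<noteq> y $ i)"
    by (simp add: lex_less_def)
  moreover have "\<forall>j<(LEAST i. x $ i \<noteq> y $ i). x $ j = y $ j"
    using not_less_Least by blast
  ultimately show "\<exists>i. (\<forall>j<i. x $ j = y $ j) \<and> x $ i < y $ i" by blast
next
  assume "\<exists>i. (\<forall>j<i. x $ j = y $ j) \<and> x $ i < y $ i"
  then obtain i where i: "\<forall>j<i. x $ j = y $ j" "x $ i < y $ i" by blast
  have "(LEAST i. x $ i \<noteq> y $ i) = i"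
    by (rule Least_equality) (use i in \<open>auto simp: not_less[symmetric]\<close>)
  with i show "lex_less x y" by (auto simp: lex_less_def)
qed

lemma lex_le_iff:
  "lex_le x y \<longleftrightarrow> x = y \<or> (\<exists>i. (\<forall>j<i. x $ j = y $ j) \<and> x $ i < y $ i)"
  by (simp add: lex_le_def lex_less_iff)

lemma lex_le_iff_diff: "lex_le x y \<longleftrightarrow> lex_le 0 (y - x)"
  unfolding lex_le_iff by (auto simp: vec_eq_iff) (metis diff_0_right diff_gt_0_iff_gt eq_iff_diff_eq_0)+

lemma lex_le_0_add:
  assumes "lex_le 0 z" "lex_le 0 w"
  shows "lex_le 0 (z + w)"
proof (cases "z = 0 \<or> w = 0")
  case False
  then obtain i k where i: "\<forall>j<i. z $ j = 0" "0 < z $ i" and k: "\<forall>j<k. w $ j = 0" "0 < w $ k"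
    using assms by (auto simp: lex_le_iff)
  have "\<exists>m. (\<forall>j<m. (z + w) $ j = 0) \<and> 0 < (z + w) $ m"
  proof (cases i k rule: linorder_cases)
    case less
    with i k show ?thesis by (intro exI[of _ i]) auto
  next
    case equal
    with i k show ?thesis by (intro exI[of _ i]) auto
  next
    case greater
    with i k show ?thesis by (intro exI[of _ k]) auto
  qed
  then show ?thesis by (auto simp: lex_le_iff)
qed (use assms in auto)

lemma lex_le_0_scaleR:
  assumes "lex_le 0 z" "0 \<le> c"
  shows "lex_le 0 (c *\<^sub>R z)"
  using assms by (cases "c = 0") (auto simp: lex_le_iff)

lemma lex_le_0_antisym:
  assumes "lex_le 0 z" "lex_le 0 (- z)"
  shows "z = 0"
proof (rule ccontr)
  assume "z \<noteq> 0"
  then obtain i k where "\<forall>j<i. z $ j = 0" "0 < z $ i" "\<forall>j<k. z $ j = 0" "z $ k < 0"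
    using assms by (auto simp: lex_le_iff)
  then show False by (cases i k rule: linorder_cases) auto
qed

lemma convex_lex_ge:
  fixes v :: "real ^ 'n::{finite,wellorder}"
  shows "convex {x. lex_le v x}"
proof (rule convexI)
  fix x y :: "real ^ 'n::{finite,wellorder}" and u w :: real
  assume "x \<in> {x. lex_le v x}" "y \<in> {x. lex_le v x}" "0 \<le> u" "0 \<le> w" "u + w = 1"
  moreover have "u *\<^sub>R (x - v) + w *\<^sub>R (y - v) = u *\<^sub>R x + w *\<^sub>R y - (u + w) *\<^sub>R v"
    by (simp add: algebra_simps)
  ultimately show "u *\<^sub>R x + w *\<^sub>R y \<in> {x. lex_le v x}"
    by (metis (mono_tags) lex_le_iff_diff lex_le_0_add lex_le_0_scaleR mem_Collect_eq scaleR_one)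
qed

lemma extreme_point_of_lex_min:
  assumes "v \<in> P" "\<And>x. x \<in> P \<Longrightarrow> lex_le v x"
  shows "v extreme_point_of P"
  unfolding extreme_point_of_def
proof (intro conjI assms ballI notI)
  fix a b assume "a \<in> P" "b \<in> P" "v \<in> open_segment a b"
  then obtain u where "a \<noteq> b" "0 < u" "u < 1" and v: "v = (1 - u) *\<^sub>R a + u *\<^sub>R b"
    and a: "lex_le 0 (a - v)" and b: "lex_le 0 (b - v)"
    using assms(2) by (auto simp: in_segment lex_le_iff_diff [of v])
  have "(1 - u) *\<^sub>R (a - v) + u *\<^sub>R (b - v) = ((1 - u) *\<^sub>R a + u *\<^sub>R b) - ((1 - u) + u) *\<^sub>R v"
    by (simp add: algebra_simps)
  then have sum0: "(1 - u) *\<^sub>R (a - v) = - (u *\<^sub>R (b - v))"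
    by (simp add: v eq_neg_iff_add_eq_0)
  have "lex_le 0 ((1 - u) *\<^sub>R (a - v))"
    using \<open>u < 1\<close> a by (simp add: lex_le_0_scaleR)
  moreover have "lex_le 0 (- ((1 - u) *\<^sub>R (a - v)))"
    unfolding sum0 minus_minus using \<open>0 < u\<close> b by (simp add: lex_le_0_scaleR)
  ultimately have "(1 - u) *\<^sub>R (a - v) = 0" by (rule lex_le_0_antisym)
  with sum0 \<open>0 < u\<close> \<open>u < 1\<close> have "a = v" "b = v" by auto
  with \<open>a \<noteq> b\<close> show False by simp
qed

section \<open>Faces, recession cones and polyhedra\<close>

lemma convex_hull_Int_face_of:
  assumes G: "G face_of C" and "convex C" "S \<subseteq> C"
  shows "convex hull S \<inter> G = convex hull (S \<inter> G)"
proof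
  define M where "M = {x \<in> C. x \<in> G \<longrightarrow> x \<in> convex hull (S \<inter> G)}"
  have "S \<subseteq> M" using \<open>S \<subseteq> C\<close> by (auto simp: M_def hull_inc)
  moreover have "convex M"
    unfolding convex_alt
  proof (intro ballI allI impI)
    fix x y and u :: real
    assume x: "x \<in> M" and y: "y \<in> M" and u: "0 \<le> u \<and> u \<le> 1"
    let ?z = "(1 - u) *\<^sub>R x + u *\<^sub>R y"
    have "?z \<in> C" using x y u \<open>convex C\<close> by (simp add: M_def convexD_alt)
    moreover have "?z \<in> convex hull (S \<inter> G)" if "?z \<in> G"
    proof (cases "x = y \<or> u = 0 \<or> u = 1")
      case True
      with x y that show ?thesis by (auto simp: M_def)
    next
      case False
      then have "?z \<in> open_segment x y" using u by (auto simp: in_segment intro!: exI [of _ u])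
      then have "x \<in> G" "y \<in> G" using face_ofD [OF G _ _ _ that] x y by (auto simp: M_def)
      with x y u show ?thesis by (simp add: M_def convexD_alt)
    qed
    ultimately show "?z \<in> M" by (simp add: M_def)
  qed
  ultimately have "convex hull S \<subseteq> M" by (rule hull_minimal)
  then show "convex hull S \<inter> G \<subseteq> convex hull (S \<inter> G)" by (auto simp: M_def)
next
  show "convex hull (S \<inter> G) \<subseteq> convex hull S \<inter> G"
    using face_of_imp_convex [OF G] by (simp add: hull_mono hull_minimal)
qed

lemma extreme_point_of_convex_hull_lex_min_on_face:
  fixes S C G :: "(real ^ 'n::{finite,wellorder}) set"
  assumes G: "G face_of C" and C: "convex C" "S \<subseteq> C"
    and v: "v \<in> S \<inter> G" and min: "\<And>s. s \<in> S \<inter> G \<Longrightarrow> lex_le v s"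
  shows "v extreme_point_of convex hull S"
proof -
  have "convex hull S \<inter> G \<subseteq> {x. lex_le v x}"
    unfolding convex_hull_Int_face_of [OF G C] using min by (intro hull_minimal convex_lex_ge) auto
  then have "v extreme_point_of convex hull S \<inter> G"
    using v by (intro extreme_point_of_lex_min) (auto intro: hull_inc)
  moreover have "convex hull S \<inter> G face_of convex hull S \<inter> C"
    by (intro face_of_Int_Int G face_of_refl convex_convex_hull)
  moreover have "convex hull S \<inter> C = convex hull S"
    using C by (simp add: hull_minimal Int_absorb2)
  ultimately show ?thesis by (metis extreme_point_of_face)
qed

lemma extreme_point_of_plus_conic:
  assumes x: "x extreme_point_of (A + C)" and "conic C"
  shows "x extreme_point_of A"
proof -
  obtain a d where a: "a \<in> A" and d: "d \<in> C" and xad: "x = a + d"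
    using x by (auto simp: extreme_point_of_def elim: set_plus_elim)
  have "0 \<in> C" using \<open>conic C\<close> d by (auto simp: conic_contains_0)
  have "d = 0"
  proof (rule ccontr)
    assume "d \<noteq> 0"
    have ray: "a + c *\<^sub>R d \<in> A + C" if "0 \<le> c" for c
      using a d \<open>conic C\<close> that by (auto simp: conic_def)
    have "midpoint a (a + 2 *\<^sub>R d) = x"
      unfolding xad midpoint_eq_iff by (simp add: scaleR_2 algebra_simps)
    moreover have "a \<noteq> a + 2 *\<^sub>R d" using \<open>d \<noteq> 0\<close> by simp
    ultimately have "x \<in> open_segment a (a + 2 *\<^sub>R d)" by (metis midpoint_in_open_segment)
    moreover have "a \<in> A + C" using ray [of 0] by simp
    moreover have "a + 2 *\<^sub>R d \<in> A + C" using ray [of 2] by simp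
    ultimately show False using x by (auto simp: extreme_point_of_def)
  qed
  have "A \<subseteq> A + C" using \<open>0 \<in> C\<close> by (metis add_0_right set_plus_intro subsetI)
  with x show ?thesis using a xad \<open>d = 0\<close> by (auto simp: extreme_point_of_def)
qed

lemma convex_cone_sum:
  assumes "convex_cone C" "\<And>i. i \<in> I \<Longrightarrow> f i \<in> C"
  shows "sum f I \<in> C"
  using assms(2)
  by (induction I rule: infinite_finite_induct)
    (auto intro: convex_cone_add [OF assms(1)] convex_cone_contains_0 [OF assms(1)])

lemma polyhedron_slice:
  fixes C :: "('a::euclidean_space \<times> real) set"
  assumes "polyhedron C"
  shows "polyhedron {x. (x, c) \<in> C}"
proof -
  obtain F where F: "finite F" "C = \<Inter>F" "\<forall>h\<in>F. \<exists>a b. a \<noteq> 0 \<and> h = {x. a \<bullet> x \<le> b}"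
    using assms unfolding polyhedron_def by blast
  have "{x. (x, c) \<in> C} = (\<Inter>h\<in>F. {x. (x, c) \<in> h})" using F(2) by auto
  moreover have "polyhedron {x. (x, c) \<in> h}" if "h \<in> F" for h
  proof -
    obtain a b where "h = {x. a \<bullet> x \<le> b}" using F(3) \<open>h \<in> F\<close> by blast
    then have "{x. (x, c) \<in> h} = {x. fst a \<bullet> x \<le> b - snd a * c}"
      by (cases a) (auto simp: algebra_simps)
    then show ?thesis by (simp add: polyhedron_halfspace_le)
  qed
  ultimately show ?thesis using F(1) by (auto intro: polyhedron_Inter)
qed

text \<open>Homogenisation: \<open>conv V + cone W\<close> is the slice at height 1 of the finitely generated
  cone over \<open>V \<times> {1} \<union> W \<times> {0}\<close>.\<close>

lemma polyhedron_convex_hull_plus_convex_cone_hull: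
  fixes V W :: "'a::euclidean_space set"
  assumes "finite V" "V \<noteq> {}" "finite W"
  shows "polyhedron (convex hull V + convex_cone hull W)"
proof -
  define H where "H = convex_cone hull (V \<times> {1::real} \<union> W \<times> {0})"
  have "polyhedron H" unfolding H_def using assms by (intro polyhedron_convex_cone_hull) auto
  have cone_V: "p \<in> convex_cone hull (V \<times> {1::real}) \<longleftrightarrow> (\<exists>a\<in>convex hull V. \<exists>c\<ge>0. p = c *\<^sub>R (a, 1))" for p
    using assms(2) by (auto simp: convex_cone_hull_convex_hull_nonempty convex_hull_Times)
  have "linear (\<lambda>w::'a. (w, 0::real))" by (simp add: linear_iff)
  moreover have "W \<times> {0} = (\<lambda>w. (w, 0::real)) ` W" by auto
  ultimately have cone_W: "convex_cone hull (W \<times> {0::real}) = (\<lambda>w. (w, 0::real)) ` (convex_cone hull W)"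
    by (simp add: convex_cone_hull_linear_image)
  have "{x. (x, 1) \<in> H} = convex hull V + convex_cone hull W"
  proof (intro set_eqI iffI)
    fix x assume "x \<in> {x. (x, 1) \<in> H}"
    then have "(x, 1) \<in> (\<Union>p\<in>convex_cone hull (V \<times> {1::real}). \<Union>q\<in>convex_cone hull (W \<times> {0}). {p + q})"
      by (simp add: H_def convex_cone_hull_Un)
    then obtain p q where "p \<in> convex_cone hull (V \<times> {1::real})" "q \<in> convex_cone hull (W \<times> {0})"
      and "(x, 1) = p + q"
      by blast
    then obtain a c d where "a \<in> convex hull V" "d \<in> convex_cone hull W" "(x, 1) = c *\<^sub>R (a, 1::real) + (d, 0)"
      unfolding cone_V cone_W by blast
    then show "x \<in> convex hull V + convex_cone hull W" by auto
  next
    fix x assume "x \<in> convex hull V + convex_cone hull W"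
    then obtain a d where "a \<in> convex hull V" "d \<in> convex_cone hull W" "x = a + d"
      by (auto elim: set_plus_elim)
    then have "(a, 1) \<in> convex_cone hull (V \<times> {1::real})" "(d, 0) \<in> convex_cone hull (W \<times> {0::real})"
      unfolding cone_V cone_W by (auto intro!: exI [of _ 1])
    moreover have "(x, 1) = (a, 1) + (d, 0::real)" using \<open>x = a + d\<close> by simp
    ultimately show "x \<in> {x. (x, 1) \<in> H}"
      unfolding H_def convex_cone_hull_Un by blast
  qed
  with \<open>polyhedron H\<close> show ?thesis by (metis polyhedron_slice)
qed

lemma convex_cone_rec_cone: "convex_cone (rec_cone C)"
  unfolding convex_cone_iff rec_cone_def
proof (intro conjI ballI allI impI CollectI)
  fix d e x and t :: real
  assume d: "d \<in> {d. \<forall>x\<in>C. \<forall>t\<ge>0. x + t *\<^sub>R d \<in> C}" and e: "e \<in> {d. \<forall>x\<in>C. \<forall>t\<ge>0. x + t *\<^sub>R d \<in> C}"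
    and "x \<in> C" "0 \<le> t"
  then have "(x + t *\<^sub>R d) + t *\<^sub>R e \<in> C" by blast
  then show "x + t *\<^sub>R (d + e) \<in> C" by (simp add: algebra_simps)
next
  fix d x and c t :: real
  assume "d \<in> {d. \<forall>x\<in>C. \<forall>t\<ge>0. x + t *\<^sub>R d \<in> C}" "x \<in> C" "0 \<le> c" "0 \<le> t"
  then have "x + (t * c) *\<^sub>R d \<in> C" by simp
  then show "x + t *\<^sub>R (c *\<^sub>R d) \<in> C" by simp
qed auto

lemma rec_cone_convex_hullI:
  assumes step: "\<And>s. s \<in> S \<Longrightarrow> s + e \<in> S"
  shows "e \<in> rec_cone (convex hull S)"
proof -
  have S_shift: "s + real m *\<^sub>R e \<in> S" if "s \<in> S" for s m
    using that by (induction m) (auto simp: algebra_simps dest: step)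
  have hull_shift: "x + real m *\<^sub>R e \<in> convex hull S" if "x \<in> convex hull S" for x m
  proof -
    have "x + real m *\<^sub>R e \<in> (+) (real m *\<^sub>R e) ` (convex hull S)"
      using that by (auto simp: add.commute)
    also have "\<dots> = convex hull ((+) (real m *\<^sub>R e) ` S)"
      by (simp add: convex_hull_translation)
    also have "\<dots> \<subseteq> convex hull S"
      using S_shift by (intro hull_mono) (auto simp: add.commute)
    finally show ?thesis .
  qed
  show ?thesis unfolding rec_cone_def
  proof (intro CollectI ballI allI impI)
    fix x and t :: real
    assume x: "x \<in> convex hull S" and "0 \<le> t"
    define m where "m = nat \<lfloor>t\<rfloor>"
    define \<theta> where "\<theta> = t - real m"
    have m: "real m = of_int \<lfloor>t\<rfloor>" using \<open>0 \<le> t\<close> by (simp add: m_def)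
    have \<theta>: "0 \<le> \<theta>" "\<theta> \<le> 1"
      using floor_correct [of t] unfolding \<theta>_def m by linarith+
    have "x + t *\<^sub>R e = (1 - \<theta>) *\<^sub>R (x + real m *\<^sub>R e) + \<theta> *\<^sub>R (x + real (Suc m) *\<^sub>R e)"
      by (simp add: \<theta>_def algebra_simps)
    then show "x + t *\<^sub>R e \<in> convex hull S"
      using convexD_alt [OF convex_convex_hull hull_shift [OF x, of m] hull_shift [OF x, of "Suc m"] \<theta>]
      by (simp only:)
  qed
qed

lemma add_rec_cone_mem:
  assumes "x \<in> C" "d \<in> rec_cone C"
  shows "x + d \<in> C"
proof -
  have "\<forall>t\<ge>0. x + t *\<^sub>R d \<in> C" using assms by (simp add: rec_cone_def)
  from this [rule_format, of 1] show ?thesis by simp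
qed

lemma convex_hull_eq_convex_hull_plus_rec_cone:
  assumes "V \<subseteq> S" "S \<subseteq> V + C" "convex C" "C \<subseteq> rec_cone (convex hull S)"
  shows "convex hull S = convex hull V + C"
proof
  have "S \<subseteq> convex hull V + C"
    using assms(2) by (meson hull_subset set_plus_mono2 order_refl order_trans)
  then show "convex hull S \<subseteq> convex hull V + C"
    using assms(3) by (simp add: hull_minimal convex_set_plus)
next
  show "convex hull V + C \<subseteq> convex hull S"
  proof
    fix x assume "x \<in> convex hull V + C"
    then obtain a d where "a \<in> convex hull S" "d \<in> rec_cone (convex hull S)" "x = a + d"
      using assms(1,4) hull_mono by (fastforce elim: set_plus_elim)
    then show "x \<in> convex hull S" by (simp add: add_rec_cone_mem)
  qed
qed

section \<open>The nonnegative orthant\<close>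

lemma mem_nonneg_orthant: "x \<in> nonneg_orthant \<longleftrightarrow> 0 \<le> x"
  by (simp add: nonneg_orthant_def less_eq_vec_def)

lemma convex_cone_nonneg_orthant: "convex_cone nonneg_orthant"
  by (auto simp: convex_cone_iff nonneg_orthant_def)

lemma convex_nonneg_orthant: "convex nonneg_orthant"
  using convex_cone_nonneg_orthant [unfolded convex_cone_def] by (elim conjE)

lemma conic_nonneg_orthant: "conic nonneg_orthant"
  using convex_cone_nonneg_orthant [unfolded convex_cone_def] by (elim conjE)

lemma nonneg_orthant_eq_convex_cone_hull_axes:
  "nonneg_orthant = convex_cone hull (range (\<lambda>i. axis i (1::real)))"
proof
  show "convex_cone hull range (\<lambda>i. axis i 1) \<subseteq> nonneg_orthant"
    by (intro hull_minimal convex_cone_nonneg_orthant)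
      (auto simp: nonneg_orthant_def axis_def)
next
  show "nonneg_orthant \<subseteq> convex_cone hull range (\<lambda>i. axis i 1)"
  proof
    fix d :: "real ^ 'n" assume "d \<in> nonneg_orthant"
    then have "(\<Sum>i\<in>UNIV. d $ i *\<^sub>R axis i (1::real)) \<in> convex_cone hull range (\<lambda>i. axis i 1)"
      by (intro convex_cone_sum convex_cone_convex_cone_hull convex_cone_hull_mul hull_inc)
        (auto simp: nonneg_orthant_def)
    moreover have "(\<Sum>i\<in>UNIV. d $ i *\<^sub>R axis i (1::real)) = d"
      unfolding scalar_mult_eq_scaleR [symmetric] by (rule basis_expansion)
    ultimately show "d \<in> convex_cone hull range (\<lambda>i. axis i 1)" by (simp only:)
  qed
qed

lemma face_of_nonneg_orthant_coordinates_zero: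
  "{x \<in> nonneg_orthant. \<forall>i\<in>I. x $ i = 0} face_of nonneg_orthant"
  unfolding face_of_def
proof (intro conjI ballI impI)
  show "convex {x \<in> nonneg_orthant. \<forall>i\<in>I. x $ i = 0}"
    by (auto simp: convex_def nonneg_orthant_def)
next
  fix a b x
  assume a: "a \<in> nonneg_orthant" and b: "b \<in> nonneg_orthant"
    and x: "x \<in> {x \<in> nonneg_orthant. \<forall>i\<in>I. x $ i = 0}" and "x \<in> open_segment a b"
  then obtain u where u: "0 < u" "u < 1" and xab: "x = (1 - u) *\<^sub>R a + u *\<^sub>R b"
    by (auto simp: in_segment)
  have "a $ i = 0 \<and> b $ i = 0" if "i \<in> I" for i
  proof -
    have "(1 - u) * a $ i + u * b $ i = 0" using x xab that by simp
    moreover have "0 \<le> a $ i" "0 \<le> b $ i" using a b by (auto simp: nonneg_orthant_def)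
    ultimately show ?thesis using u by (smt (verit) mult_pos_pos mult_nonneg_nonneg)
  qed
  with a b show "a \<in> {x \<in> nonneg_orthant. \<forall>i\<in>I. x $ i = 0}" "b \<in> {x \<in> nonneg_orthant. \<forall>i\<in>I. x $ i = 0}"
    by auto
qed auto

section \<open>The polyhedron Q\<close>

definition Qpoints :: "real ^ 'n::{finite,wellorder} \<Rightarrow> (real ^ 'n::{finite,wellorder}) set" where
  "Qpoints xb = {x. x \<in> nonneg_orthant \<inter> int_points \<and> lex_le xb x}"

definition Qvertices :: "real ^ 'n::{finite,wellorder} \<Rightarrow> (real ^ 'n::{finite,wellorder}) set" where
  "Qvertices xb = insert xb {vpt xb k | k. k < leading_index xb}"

lemma Qset_eq_convex_hull_Qpoints: "Qset xb = convex hull Qpoints xb"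
  by (simp add: Qset_def Qpoints_def)

lemma leading_index_eq_Max:
  assumes "\<exists>i. 0 < xb $ i"
  shows "leading_index xb = Max {i. 0 < xb $ i}"
  unfolding leading_index_def using assms by (intro Greatest_Max) auto

lemma leading_index_pos:
  assumes "xb \<in> nonneg_orthant" "xb \<noteq> 0"
  shows "0 < xb $ leading_index xb"
proof -
  have "\<exists>i. 0 < xb $ i"
    using assms by (auto simp: nonneg_orthant_def vec_eq_iff less_le)
  then show ?thesis
    using Max_in [of "{i. 0 < xb $ i}"] by (auto simp: leading_index_eq_Max)
qed

lemma nth_beyond_leading_index:
  assumes "xb \<in> nonneg_orthant" "leading_index xb < i"
  shows "xb $ i = 0"
proof -
  have "\<not> 0 < xb $ i"
  proof
    assume "0 < xb $ i"
    then have "leading_index xb = Max {i. 0 < xb $ i}" by (intro leading_index_eq_Max) auto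
    with \<open>0 < xb $ i\<close> have "i \<le> leading_index xb" by simp
    with assms(2) show False by simp
  qed
  moreover have "0 \<le> xb $ i" using assms(1) by (simp add: nonneg_orthant_def)
  ultimately show ?thesis by simp
qed

lemma Ints_less_imp_add_one_le: "(a::real) \<in> \<int> \<Longrightarrow> b \<in> \<int> \<Longrightarrow> a < b \<Longrightarrow> a + 1 \<le> b"
  by (elim Ints_cases) simp

lemma vpt_nth: "vpt xb k $ i = (if i < k then xb $ i else if i = k then xb $ k + 1 else 0)"
  by (simp add: vpt_def)

lemma vpt_in_Qpoints:
  assumes "xb \<in> nonneg_orthant \<inter> int_points"
  shows "vpt xb k \<in> Qpoints xb"
proof -
  have "vpt xb k \<in> nonneg_orthant \<inter> int_points"
    using assms by (auto simp: nonneg_orthant_def int_points_def vpt_nth)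
  moreover have "lex_le xb (vpt xb k)"
    unfolding lex_le_iff by (auto simp: vpt_nth intro!: exI [of _ k])
  ultimately show ?thesis by (simp add: Qpoints_def)
qed

lemma Qvertices_subset_Qpoints:
  assumes "xb \<in> nonneg_orthant \<inter> int_points"
  shows "Qvertices xb \<subseteq> Qpoints xb"
  using assms vpt_in_Qpoints [OF assms] by (auto simp: Qvertices_def Qpoints_def lex_le_def)

lemma finite_Qvertices: "finite (Qvertices xb)"
proof -
  have "{vpt xb k | k. k < leading_index xb} \<subseteq> range (vpt xb)" by blast
  then show ?thesis by (auto simp: Qvertices_def intro: finite_subset)
qed

lemma Qpoints_dominated:
  assumes xb: "xb \<in> nonneg_orthant \<inter> int_points" and s: "s \<in> Qpoints xb"
  shows "\<exists>v\<in>Qvertices xb. v \<le> s"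
proof -
  have s_nonneg: "0 \<le> s $ i" for i using s by (simp add: Qpoints_def nonneg_orthant_def)
  consider "s = xb" | j where "\<forall>i<j. xb $ i = s $ i" "xb $ j < s $ j"
    using s by (auto simp: Qpoints_def lex_le_iff)
  then show ?thesis
  proof cases
    case 1
    then show ?thesis by (simp add: Qvertices_def)
  next
    case (2 j)
    show ?thesis
    proof (cases "j < leading_index xb")
      case True
      have "xb $ j + 1 \<le> s $ j"
        using 2 xb s by (intro Ints_less_imp_add_one_le) (auto simp: Qpoints_def int_points_def)
      with 2 s_nonneg have "vpt xb j \<le> s" by (auto simp: less_eq_vec_def vpt_nth)
      with True show ?thesis by (auto simp: Qvertices_def)
    next
      case False
      have "xb $ i \<le> s $ i" for i
        using 2 s_nonneg nth_beyond_leading_index [of xb i] xb False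
        by (cases i j rule: linorder_cases) auto
      then show ?thesis by (auto simp: Qvertices_def less_eq_vec_def)
    qed
  qed
qed

lemma Qpoints_subset_Qvertices_plus_nonneg_orthant:
  assumes "xb \<in> nonneg_orthant \<inter> int_points"
  shows "Qpoints xb \<subseteq> Qvertices xb + nonneg_orthant"
proof
  fix s assume "s \<in> Qpoints xb"
  then obtain v where "v \<in> Qvertices xb" "v \<le> s" using Qpoints_dominated [OF assms] by blast
  then have "v + (s - v) \<in> Qvertices xb + nonneg_orthant"
    by (intro set_plus_intro) (auto simp: mem_nonneg_orthant)
  then show "s \<in> Qvertices xb + nonneg_orthant" by simp
qed

lemma axis_in_rec_cone_Qset: "axis i 1 \<in> rec_cone (Qset xb)"
  unfolding Qset_eq_convex_hull_Qpoints
proof (rule rec_cone_convex_hullI)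
  fix s assume s: "s \<in> Qpoints xb"
  have "lex_le 0 (s - xb)" using s by (simp add: Qpoints_def lex_le_iff_diff [of xb])
  moreover have "lex_le 0 (axis i (1::real))"
    unfolding lex_le_iff by (intro disjI2 exI [of _ i]) (simp add: axis_def)
  ultimately have "lex_le 0 ((s - xb) + axis i 1)" by (rule lex_le_0_add)
  then have "lex_le xb (s + axis i 1)" by (simp add: lex_le_iff_diff [of xb] diff_add_eq)
  with s show "s + axis i 1 \<in> Qpoints xb"
    by (auto simp: Qpoints_def nonneg_orthant_def int_points_def axis_def)
qed

lemma nonneg_orthant_subset_rec_cone_Qset: "nonneg_orthant \<subseteq> rec_cone (Qset xb)"
  unfolding nonneg_orthant_eq_convex_cone_hull_axes
  by (intro hull_minimal convex_cone_rec_cone) (auto intro: axis_in_rec_cone_Qset)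

lemma Qset_subset_nonneg_orthant: "Qset xb \<subseteq> nonneg_orthant"
  unfolding Qset_eq_convex_hull_Qpoints
  by (intro hull_minimal convex_nonneg_orthant) (auto simp: Qpoints_def)

lemma self_mem_Qset:
  assumes "xb \<in> nonneg_orthant \<inter> int_points"
  shows "xb \<in> Qset xb"
  using assms by (auto simp: Qset_eq_convex_hull_Qpoints Qpoints_def lex_le_def intro: hull_inc)

lemma rec_cone_Qset:
  assumes xb: "xb \<in> nonneg_orthant \<inter> int_points"
  shows "rec_cone (Qset xb) = nonneg_orthant"
proof
  show "rec_cone (Qset xb) \<subseteq> nonneg_orthant"
  proof
    fix d assume d: "d \<in> rec_cone (Qset xb)"
    show "d \<in> nonneg_orthant" unfolding nonneg_orthant_def
    proof (intro CollectI allI leI notI)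
      fix i assume neg: "d $ i < 0"
      define t where "t = (xb $ i + 1) / - d $ i"
      have "0 \<le> xb $ i" using xb by (simp add: nonneg_orthant_def)
      then have "0 \<le> t" using neg by (simp add: t_def divide_nonneg_neg)
      moreover have "xb \<in> Qset xb" using xb by (rule self_mem_Qset)
      ultimately have "xb + t *\<^sub>R d \<in> Qset xb" using d by (simp add: rec_cone_def)
      then have "0 \<le> (xb + t *\<^sub>R d) $ i"
        using Qset_subset_nonneg_orthant by (force simp: nonneg_orthant_def)
      moreover have "(xb + t *\<^sub>R d) $ i = -1" using neg by (simp add: t_def field_simps)
      ultimately show False by simp
    qed
  qed
qed (rule nonneg_orthant_subset_rec_cone_Qset)

lemma Qset_eq_Qvertices_plus_nonneg_orthant:
  assumes "xb \<in> nonneg_orthant \<inter> int_points"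
  shows "Qset xb = convex hull Qvertices xb + nonneg_orthant"
  unfolding Qset_eq_convex_hull_Qpoints
proof (rule convex_hull_eq_convex_hull_plus_rec_cone)
  show "nonneg_orthant \<subseteq> rec_cone (convex hull Qpoints xb)"
    using nonneg_orthant_subset_rec_cone_Qset by (simp add: Qset_eq_convex_hull_Qpoints)
qed (intro Qvertices_subset_Qpoints Qpoints_subset_Qvertices_plus_nonneg_orthant
    convex_nonneg_orthant assms)+

lemma polyhedron_Qset:
  assumes "xb \<in> nonneg_orthant \<inter> int_points"
  shows "polyhedron (Qset xb)"
  unfolding Qset_eq_Qvertices_plus_nonneg_orthant [OF assms] nonneg_orthant_eq_convex_cone_hull_axes
  by (intro polyhedron_convex_hull_plus_convex_cone_hull finite_Qvertices finite_imageI finite)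
    (simp add: Qvertices_def)

lemma aff_dim_Qset:
  fixes xb :: "real ^ 'n::{finite,wellorder}"
  assumes "xb \<in> nonneg_orthant \<inter> int_points"
  shows "aff_dim (Qset xb) = int CARD('n)"
proof -
  define c where "c = xb + (\<chi> i. 1)"
  have "ball c 1 \<subseteq> Qset xb"
  proof
    fix y assume y: "y \<in> ball c 1"
    have "y - xb \<in> nonneg_orthant"
      unfolding nonneg_orthant_def
    proof (intro CollectI allI)
      fix i
      have "\<bar>(c - y) $ i\<bar> \<le> norm (c - y)" by (rule component_le_norm_cart)
      also have "\<dots> < 1" using y by (simp add: dist_norm)
      finally have "\<bar>xb $ i + 1 - y $ i\<bar> < 1" by (simp add: c_def)
      then show "0 \<le> (y - xb) $ i" by simp
    qed
    then have "xb + (y - xb) \<in> Qset xb"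
      using add_rec_cone_mem self_mem_Qset [OF assms] nonneg_orthant_subset_rec_cone_Qset by blast
    then show "y \<in> Qset xb" by simp
  qed
  then have "aff_dim (ball c 1) \<le> aff_dim (Qset xb)" by (rule aff_dim_subset)
  then have "int CARD('n) \<le> aff_dim (Qset xb)" by (simp add: aff_dim_open)
  then show ?thesis using aff_dim_le_DIM [of "Qset xb"] by simp
qed

lemma lex_le_vpt_if_vanishes_beyond:
  assumes xb: "xb \<in> nonneg_orthant \<inter> int_points" "xb \<noteq> 0" and k: "k < leading_index xb"
    and s: "s \<in> Qpoints xb" and s0: "\<forall>i>k. s $ i = 0"
  shows "lex_le (vpt xb k) s"
proof -
  have "s \<noteq> xb" using leading_index_pos [of xb] xb s0 k by auto
  then obtain j where j: "\<forall>i<j. xb $ i = s $ i" "xb $ j < s $ j"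
    using s by (auto simp: Qpoints_def lex_le_iff)
  have "j \<le> k"
  proof (rule ccontr)
    assume "\<not> j \<le> k"
    then have "s $ j = 0" using s0 by simp
    moreover have "0 \<le> xb $ j" using xb by (simp add: nonneg_orthant_def)
    ultimately show False using j by simp
  qed
  show ?thesis
  proof (cases "j < k")
    case True
    have "vpt xb k $ i = s $ i" if "i < j" for i
    proof -
      have "i < k" using that True by (rule less_trans)
      then show ?thesis using j(1) that by (simp add: vpt_nth)
    qed
    moreover have "vpt xb k $ j < s $ j" using j True by (simp add: vpt_nth)
    ultimately show ?thesis unfolding lex_le_iff by (intro disjI2 exI [of _ j]) simp
  next
    case False
    with \<open>j \<le> k\<close> have "j = k" by simp
    have agree: "\<forall>i<k. vpt xb k $ i = s $ i" using j \<open>j = k\<close> by (simp add: vpt_nth)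
    have "xb $ k + 1 \<le> s $ k"
      using j xb s \<open>j = k\<close> by (intro Ints_less_imp_add_one_le) (auto simp: Qpoints_def int_points_def)
    show ?thesis
    proof (cases "s $ k = xb $ k + 1")
      case True
      have "vpt xb k $ i = s $ i" for i
      proof (cases i k rule: linorder_cases)
        case less
        then show ?thesis using agree by simp
      next
        case equal
        then show ?thesis using True by (simp add: vpt_nth)
      next
        case greater
        then show ?thesis using s0 less_not_sym [OF greater] by (simp add: vpt_nth)
      qed
      then show ?thesis by (simp add: lex_le_def vec_eq_iff)
    next
      case False
      with \<open>xb $ k + 1 \<le> s $ k\<close> have "vpt xb k $ k < s $ k" by (simp add: vpt_nth)
      with agree show ?thesis unfolding lex_le_iff by (intro disjI2 exI [of _ k]) simp
    qed
  qed
qed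

lemma extreme_point_of_Qset_if_Qvertices:
  assumes xb: "xb \<in> nonneg_orthant \<inter> int_points" "xb \<noteq> 0" and v: "v \<in> Qvertices xb"
  shows "v extreme_point_of Qset xb"
proof -
  obtain k where v0: "\<forall>i>k. v $ i = 0"
    and min: "\<And>s. s \<in> Qpoints xb \<Longrightarrow> \<forall>i>k. s $ i = 0 \<Longrightarrow> lex_le v s"
  proof (cases "v = xb")
    case True
    then show thesis
      using that [of "leading_index xb"] nth_beyond_leading_index xb by (auto simp: Qpoints_def)
  next
    case False
    then obtain k where k: "k < leading_index xb" and "v = vpt xb k"
      using v by (auto simp: Qvertices_def)
    show thesis
    proof (rule that [of k])
      show "\<forall>i>k. v $ i = 0" using \<open>v = vpt xb k\<close> by (auto simp: vpt_nth dest: less_not_sym)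
      show "lex_le v s" if "s \<in> Qpoints xb" "\<forall>i>k. s $ i = 0" for s
        using lex_le_vpt_if_vanishes_beyond [OF xb k that] \<open>v = vpt xb k\<close> by simp
    qed
  qed
  have "v \<in> Qpoints xb" using v Qvertices_subset_Qpoints [OF xb(1)] by blast
  then show ?thesis
    unfolding Qset_eq_convex_hull_Qpoints
    by (intro extreme_point_of_convex_hull_lex_min_on_face
        [OF face_of_nonneg_orthant_coordinates_zero [of "{k<..}"] convex_nonneg_orthant])
      (use v0 min in \<open>auto simp: Qpoints_def\<close>)
qed

lemma extreme_points_Qset:
  assumes xb: "xb \<in> nonneg_orthant \<inter> int_points" "xb \<noteq> 0"
  shows "{v. v extreme_point_of Qset xb} = Qvertices xb"
proof (intro set_eqI iffI)
  fix v assume "v \<in> {v. v extreme_point_of Qset xb}"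
  then have "v extreme_point_of convex hull Qvertices xb + nonneg_orthant"
    by (simp add: Qset_eq_Qvertices_plus_nonneg_orthant [OF xb(1)])
  then have "v extreme_point_of convex hull Qvertices xb"
    using conic_nonneg_orthant by (rule extreme_point_of_plus_conic)
  then show "v \<in> Qvertices xb" by (rule extreme_point_of_convex_hull)
qed (simp add: extreme_point_of_Qset_if_Qvertices [OF xb])

theorem lemma1:
  fixes xb :: "real ^ 'n::{finite,wellorder}"
  assumes "xb \<in> nonneg_orthant \<inter> int_points"
  shows "rec_cone (Qset xb) = nonneg_orthant
         \<and> polyhedron (Qset xb)
         \<and> aff_dim (Qset xb) = int CARD('n)
         \<and> (xb \<noteq> 0 \<longrightarrow>
              {v. v extreme_point_of (Qset xb)} =
                insert xb {vpt xb k | k. k < leading_index xb})"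
  using rec_cone_Qset [OF assms] polyhedron_Qset [OF assms] aff_dim_Qset [OF assms]
    extreme_points_Qset [OF assms]
  by (simp add: Qvertices_def)

end
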